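(* Let $r>0$, $0<p<1$ and $q=1-p$. Let $N$ be a negative binomial random variable with $P(N=n)=\binom{r+n-1}{n}p^r q^n$, $n=0,1,2,\dots$, and conditionally on $N=n$ let $X$ be uniformly distributed on $\{0,1,\dots,n\}$, i.e. $P(X=x\mid N=n)=\frac{1}{n+1}$ for $x\in\{0,\dots,n\}$. Then for every $x=0,1,2,\dots$, $$P(X=x)=\frac{q^{x}p^{r}}{1+x}\binom{r+x-1}{x}\,{}_2F_1(1,r+x;2+x;q).$$
   Context: For real $r>0$, $\binom{r+n-1}{n}=\frac{\Gamma(r+n)}{n!\,\Gamma(r)}$. The Gauss hypergeometric function is ${}_2F_1(a,b;c;z)=\sum_{n=0}^\infty \frac{(a)_n(b)_n}{(c)_n}\frac{z^n}{n!}$ for $|z|<1$, where $(s)_0=1$ and $(s)_n=s(s+1)\cdots(s+n-1)$ for $n\ge1$. The distribution of $X$ is called the Uniform-negative binomial distribution $\mathcal{UNB}(r,p)$. *)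

theory Defs
  imports "HOL-Probability.Probability"
begin

text \<open>Generalised binomial coefficient binom(r+n-1, n) for real r > 0, via the Gamma function.\<close>
definition nb_binom :: "real \<Rightarrow> nat \<Rightarrow> real" where
  "nb_binom r n = Gamma (r + real n) / (fact n * Gamma r)"

definition hyp2F1 :: "real \<Rightarrow> real \<Rightarrow> real \<Rightarrow> real \<Rightarrow> real" where
  "hyp2F1 a b c z =
     (\<Sum>n. pochhammer a n * pochhammer b n / pochhammer c n * z ^ n / fact n)"

end

theory Submission
  imports Defs
begin

text \<open>
  Conditioning on \<open>N\<close> gives \<open>P(X = x) = \<Sum>\<^sub>k P(N = x + k) / (x + k + 1)\<close>.
  Since \<open>\<Gamma>(r + x + k) = \<Gamma>(r + x) (r + x)\<^sub>k\<close> and \<open>(x + k + 1)! = (x + 1)! (2 + x)\<^sub>k\<close>,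
  the \<open>k\<close>-th term is the first one times \<open>(r + x)\<^sub>k q\<^sup>k / (2 + x)\<^sub>k\<close>, which, as
  \<open>(1)\<^sub>k = k!\<close>, is the \<open>k\<close>-th term of \<open>\<^sub>2F\<^sub>1(1, r + x; 2 + x; q)\<close>.
\<close>

lemma summable_pmf_nat: "summable (pmf (M :: nat pmf))"
proof (rule bounded_imp_summable[where B = 1])
  fix n
  have "(\<Sum>k\<le>n. pmf M k) = measure_pmf.prob M {..n}"
    by (simp add: measure_measure_pmf_finite)
  also have "\<dots> \<le> 1" by simp
  finally show "(\<Sum>k\<le>n. pmf M k) \<le> 1" .
qed simp

lemma sums_pmf_bind_nat:
  fixes N :: "nat pmf" and K :: "nat \<Rightarrow> 'a pmf"
  shows "(\<lambda>n. pmf N n * pmf (K n) x) sums pmf (bind_pmf N K) x"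
proof -
  let ?f = "\<lambda>n. pmf N n * pmf (K n) x"
  have nonneg: "\<And>n. ?f n \<ge> 0" by simp
  have summable: "summable ?f"
    by (rule summable_comparison_test'[OF summable_pmf_nat[of N], where N = 0])
       (simp add: mult_left_le pmf_le_1)
  have "ennreal (pmf (bind_pmf N K) x) = (\<integral>\<^sup>+n. pmf (K n) x \<partial>measure_pmf N)"
    by (rule ennreal_pmf_bind)
  also have "\<dots> = (\<Sum>n. ennreal (?f n))"
    by (simp add: nn_integral_measure_pmf nn_integral_count_space_nat ennreal_mult')
  also have "\<dots> = ennreal (suminf ?f)"
    using nonneg summable by (rule suminf_ennreal2)
  finally have "pmf (bind_pmf N K) x = suminf ?f"
    using nonneg by (simp add: suminf_nonneg summable)
  with summable show ?thesis by (simp add: summable_sums)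
qed

lemma nb_binom_pos: "r > 0 \<Longrightarrow> nb_binom r n > 0"
  by (simp add: nb_binom_def)

lemma nb_binom_add:
  assumes "r > 0"
  shows "nb_binom r (x + k) * fact (x + k) = nb_binom r x * fact x * pochhammer (r + real x) k"
proof -
  have "r + real x \<notin> \<int>\<^sub>\<le>\<^sub>0"
    using assms by (auto elim!: nonpos_Ints_cases)
  moreover have "Gamma r > 0" "Gamma (r + real x) > 0"
    using assms by simp_all
  ultimately have "Gamma (r + real (x + k)) = Gamma (r + real x) * pochhammer (r + real x) k"
    using pochhammer_Gamma[of "r + real x" k] by (simp add: add.assoc)
  with \<open>Gamma r > 0\<close> show ?thesis
    by (simp add: nb_binom_def)
qed

lemma fact_Suc_add: "fact (Suc (x + k)) = fact (Suc x) * pochhammer (2 + real x) k"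
  using pochhammer_product'[of "1 :: real" "Suc x" k]
  by (simp add: pochhammer_fact add_ac)

lemma nb_binom_add_div_Suc:
  assumes "r > 0"
  shows "nb_binom r (x + k) / (real (x + k) + 1)
           = nb_binom r x / (1 + real x) * (pochhammer (r + real x) k / pochhammer (2 + real x) k)"
proof -
  have "fact x * (nb_binom r (x + k) * (1 + real x) * pochhammer (2 + real x) k)
          = (real (x + k) + 1) * (nb_binom r (x + k) * fact (x + k))"
    using fact_Suc_add[of x k] by (simp add: ac_simps)
  also have "\<dots> = fact x * ((real (x + k) + 1) * nb_binom r x * pochhammer (r + real x) k)"
    by (simp only: nb_binom_add[OF assms]) (simp add: ac_simps)
  finally have "nb_binom r (x + k) * (1 + real x) * pochhammer (2 + real x) k
                  = (real (x + k) + 1) * nb_binom r x * pochhammer (r + real x) k"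
    by simp
  moreover have "pochhammer (2 + real x) k > 0"
    by (simp add: pochhammer_pos)
  ultimately show ?thesis
    by (simp add: divide_simps ac_simps)
qed

lemma hyp2F1_1: "hyp2F1 1 b c z = (\<Sum>n. pochhammer b n / pochhammer c n * z ^ n)"
  by (simp add: hyp2F1_def pochhammer_fact[symmetric])

theorem theorem1:
  fixes r p q :: real and N X :: "nat pmf"
  assumes "r > 0" and "0 < p" and "p < 1" and "q = 1 - p"
    and "\<And>n. pmf N n = nb_binom r n * p powr r * q ^ n"
    and "X = bind_pmf N (\<lambda>n. pmf_of_set {0..n})"
  shows "\<forall>x::nat. pmf X x =
           q ^ x * p powr r / (1 + real x) * nb_binom r x
             * hyp2F1 1 (r + real x) (2 + real x) q"
proof
  fix x :: nat
  define C where "C = q ^ x * p powr r / (1 + real x) * nb_binom r x"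
  define g where "g = (\<lambda>k. pochhammer (r + real x) k / pochhammer (2 + real x) k * q ^ k)"
  have "(\<lambda>n. pmf N n * pmf (pmf_of_set {0..n}) x) sums pmf X x"
    unfolding assms(6) by (rule sums_pmf_bind_nat)
  then have "(\<lambda>k. pmf N (k + x) * pmf (pmf_of_set {0..k + x}) x) sums pmf X x"
    using sums_iff_shift[of "\<lambda>n. pmf N n * pmf (pmf_of_set {0..n}) x" x] by simp
  then have "(\<lambda>k. pmf N (k + x) / (real (k + x) + 1)) sums pmf X x"
    by (simp add: add_ac)
  moreover have "pmf N (k + x) / (real (k + x) + 1) = C * g k" for k
  proof -
    have "pmf N (k + x) / (real (k + x) + 1)
            = p powr r * q ^ x * q ^ k * (nb_binom r (x + k) / (real (x + k) + 1))"
      by (simp add: assms(5) add.commute power_add)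
    then show ?thesis
      unfolding nb_binom_add_div_Suc[OF assms(1)] by (simp add: C_def g_def)
  qed
  moreover have "C \<noteq> 0"
    using assms(1-4) nb_binom_pos[of r x] by (simp add: C_def)
  ultimately have "g sums (pmf X x / C)"
    using sums_mult_iff[of C g "pmf X x / C"] by simp
  then show "pmf X x = C * hyp2F1 1 (r + real x) (2 + real x) q"
    using \<open>C \<noteq> 0\<close> by (simp add: hyp2F1_1 g_def sums_iff)
qed

end
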